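(* Let $b,c\in Z^{10}$ with $\sum_i b_i=\sum_i c_i=0$. Suppose there are distinct odd indices $i_1,i_2,i_3\in\{1,3,5,7,9\}$ such that $t\nmid B_{i_l}$ for $l=1,2,3$ and $t\mid B_i$ for the two remaining odd $i$, and distinct odd indices $j_1,j_2,j_3$ such that $t\nmid C_{j_l}$ for $l=1,2,3$ and $t\mid C_j$ for the two remaining odd $j$. Then $\mathbb{M}(b)\cong\mathbb{M}(c)$ as $B_{5,10}$-modules if and only if $\{i_1,i_2,i_3\}=\{j_1,j_2,j_3\}$.
   Context: Let $Z=\mathbb{C}[[t]]$. Let $\Gamma_{10}$ be the quiver with vertices $0,1,\dots,9$ (indices taken mod $10$) on a cycle and arrows $x_i\colon i-1\to i$, $y_i\colon i\to i-1$ for $i=1,\dots,10$. Let $B_{5,10}$ be the completed path algebra of $\Gamma_{10}$ modulo the closed ideal generated by $xy=yx$ and $x^5=y^5$ at every vertex. For $b=(b_1,\dots,b_{10})\in Z^{10}$ with $\sum_i b_i=0$, the $B_{5,10}$-module $\mathbb{M}(b)$ has $V_i=Z\oplus Z$ at every vertex, and for odd $j$: $x_j=\begin{pmatrix} t& b_j\\ 0&1\end{pmatrix}$, $y_j=\begin{pmatrix} 1&-b_j\\0&t\end{pmatrix}$; for even $j$: $x_j=\begin{pmatrix}1&b_j\\0&t\end{pmatrix}$, $y_j=\begin{pmatrix}t&-b_j\\0&1\end{pmatrix}$. An isomorphism $\mathbb{M}(b)\to\mathbb{M}(c)$ is a family of invertible $Z$-linear maps $\varphi_i\colon Z^2\to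 Z^2$ commuting with all $x_i$ and $y_i$. For odd $i$ write $B_i=b_i+b_{i+1}$ and $C_i=c_i+c_{i+1}$ (indices mod $10$). *)

theory Defs
  imports "HOL-Analysis.Analysis" "HOL-Computational_Algebra.Formal_Power_Series"
begin

text \<open>Z = C[[t]] is the type complex fps, t = fps_X. A Z-linear map Z^2 -> Z^2 is a
2x2 matrix over Z (acting on column vectors); composition is matrix product.\<close>

type_synonym Z = "complex fps"

definition mat2 :: "Z \<Rightarrow> Z \<Rightarrow> Z \<Rightarrow> Z \<Rightarrow> Z ^ 2 ^ 2" where
  "mat2 a b c d = (\<chi> i j. if i = 1 then (if j = 1 then a else b) else (if j = 1 then c else d))"

text \<open>Arrow x_j : vertex j-1 -> vertex j, y_j : vertex j -> vertex j-1 (j = 1..10, vertex 10 = 0)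
of the module M(b); b is indexed by 1..10.\<close>

definition xmat :: "(nat \<Rightarrow> Z) \<Rightarrow> nat \<Rightarrow> Z ^ 2 ^ 2" where
  "xmat b j = (if odd j then mat2 fps_X (b j) 0 1 else mat2 1 (b j) 0 fps_X)"

definition ymat :: "(nat \<Rightarrow> Z) \<Rightarrow> nat \<Rightarrow> Z ^ 2 ^ 2" where
  "ymat b j = (if odd j then mat2 1 (- b j) 0 fps_X else mat2 fps_X (- b j) 0 1)"

definition iso_M :: "(nat \<Rightarrow> Z) \<Rightarrow> (nat \<Rightarrow> Z) \<Rightarrow> bool" where
  "iso_M b c \<longleftrightarrow> (\<exists>\<phi> :: nat \<Rightarrow> Z ^ 2 ^ 2.
     (\<forall>i<10. invertible (\<phi> i)) \<and>
     (\<forall>j\<in>{1..10}. \<phi> (j mod 10) ** xmat b j = xmat c j ** \<phi> (j - 1) \<and>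
                    \<phi> (j - 1) ** ymat b j = ymat c j ** \<phi> (j mod 10)))"

text \<open>B_i = b_i + b_(i+1) for odd i (only odd i in 1..9 are used, so no wrap-around).\<close>

definition Bsum :: "(nat \<Rightarrow> Z) \<Rightarrow> nat \<Rightarrow> Z" where
  "Bsum b i = b i + b (i + 1)"

end

(*
  If \<phi> is an isomorphism, the relations for the arrows x_j and x_(j+1) (j odd), read modulo t
  at the vertices j-1, j, j+1, force t | B_j exactly when t | C_j; so the odd indices j with
  t not dividing B_j are those with t not dividing C_j.

  Conversely, the isomorphism is built around the cycle. At the even vertex 2k it is
  [[P_k, Q_k], [a t, S_k]] with P_k = p + a (C_1 + C_3 + ... + C_(2k-1)) and
  S_k = s - a (B_1 + B_3 + ... + B_(2k-1)); at the odd vertex 2k+1 it is forced by x_(2k+1).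
  Passing from 2k to 2k+2 needs t to divide a defect whose constant term depends only on p, s, a
  and the constant terms of the B_j, C_j. When both have the same three nonzero positions and
  sum to zero, explicit constants with p s \<noteq> 0 satisfy all five conditions; the determinants
  then stay congruent to p s modulo t, and the vanishing of \<Sum> B_j and \<Sum> C_j closes the cycle.
*)
theory Submission
  imports Defs
begin

lemma invertible_iff_det_dvd_1:
  fixes M :: "'a::comm_ring_1^2^2"
  shows "invertible M \<longleftrightarrow> det M dvd 1"
proof
  assume "invertible M"
  then obtain M' where "M ** M' = mat 1" unfolding invertible_def by blast
  then have "det M * det M' = 1" by (metis det_mul det_I)
  then show "det M dvd 1" by (metis dvdI)
next
  assume "det M dvd 1"
  then obtain e where e: "det M * e = 1" by (metis dvdE)
  define M' :: "'a^2^2" where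
    "M' = (\<chi> i j. e * (if i = 1 then (if j = 1 then M$2$2 else - M$1$2)
                            else (if j = 1 then - M$2$1 else M$1$1)))"
  have "M ** M' = mat 1 \<and> M' ** M = mat 1"
    using e unfolding M'_def det_2 matrix_matrix_mult_def mat_def vec_eq_iff forall_2 sum_2
    by (simp add: algebra_simps)
  then show "invertible M" unfolding invertible_def by blast
qed

lemma mat2_eq_iff: "mat2 a b c d = mat2 a' b' c' d' \<longleftrightarrow> a = a' \<and> b = b' \<and> c = c' \<and> d = d'"
  unfolding mat2_def vec_eq_iff forall_2 by simp

lemma mat2_mult: "mat2 a b c d ** mat2 e f g h = mat2 (a*e + b*g) (a*f + b*h) (c*e + d*g) (c*f + d*h)"
  unfolding mat2_def matrix_matrix_mult_def vec_eq_iff forall_2 sum_2 by simp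

lemma mat2_entries: "M = mat2 (M$1$1) (M$1$2) (M$2$1) (M$2$2)"
  unfolding mat2_def vec_eq_iff forall_2 by simp

lemma det_mat2: "det (mat2 a b c d) = a*d - b*c"
  unfolding det_2 mat2_def by simp

lemma invertible_mat2_iff: "invertible (mat2 a b c d) \<longleftrightarrow> fps_nth (a*d - b*c) 0 \<noteq> 0"
  by (simp add: invertible_iff_det_dvd_1 det_mat2)

lemma fps_X_mult_fps_shift_1:
  fixes f :: "'a::comm_ring_1 fps"
  shows "fps_nth f 0 = 0 \<Longrightarrow> fps_X * fps_shift 1 f = f"
  by (intro fps_ext) simp

lemma fps_X_dvd_iff:
  fixes f :: "'a::comm_ring_1 fps"
  shows "fps_X dvd f \<longleftrightarrow> fps_nth f 0 = 0"
  by (metis dvdE dvd_triv_left fps_X_mult_fps_shift_1 fps_X_mult_nth)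

lemma intertwining_preserves_X_dvd:
  fixes M N L :: "Z^2^2" and b c b' c' :: Z
  assumes "invertible M"
    and odd_arrow: "N ** mat2 fps_X b 0 1 = mat2 fps_X c 0 1 ** M"
    and even_arrow: "L ** mat2 1 b' 0 fps_X = mat2 1 c' 0 fps_X ** N"
  shows "fps_X dvd (b + b') \<longleftrightarrow> fps_X dvd (c + c')"
proof -
  obtain p q r s where M: "M = mat2 p q r s" using mat2_entries by blast
  obtain P Q R S where N: "N = mat2 P Q R S" using mat2_entries by blast
  obtain p' q' r' s' where L: "L = mat2 p' q' r' s'" using mat2_entries by blast
  have odd: "P * fps_X = fps_X * p + c * r" "P * b + Q = fps_X * q + c * s" "R * fps_X = r" "R * b + S = s"
    using odd_arrow by (simp_all add: M N mat2_mult mat2_eq_iff)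
  have even: "p' = P + c' * R" "p' * b' + q' * fps_X = Q + c' * S"
    using even_arrow unfolding N L mat2_mult mat2_eq_iff by auto
  have "fps_X * P = fps_X * (p + c * R)"
    using odd(1) by (simp add: algebra_simps flip: odd(3))
  then have P: "P = p + c * R" by simp
  have "fps_nth r 0 = 0" using odd(3) by (metis fps_X_mult_nth mult.commute)
  then have ps: "fps_nth p 0 * fps_nth s 0 \<noteq> 0"
    using \<open>invertible M\<close> by (simp add: M invertible_mat2_iff)
  \<comment> \<open>modulo t, the odd relation gives Q = c s - P b and the even one (P + c' R) b' = Q + c' S\<close>
  have "fps_nth (c + c') 0 * fps_nth s 0 = fps_nth (b + b') 0 * (fps_nth p 0 + fps_nth (c + c') 0 * fps_nth R 0)"
    using arg_cong[OF odd(2), of "\<lambda>f. fps_nth f 0"] arg_cong[OF even(2), of "\<lambda>f. fps_nth f 0"] even(1) P odd(4)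
    by (simp add: algebra_simps flip: odd(4))
  with ps show ?thesis by (auto simp: fps_X_dvd_iff)
qed

lemma iso_M_imp_X_dvd_Bsum_iff:
  assumes "iso_M b c" and j: "j \<in> {1, 3, 5, 7, 9}"
  shows "fps_X dvd Bsum b j \<longleftrightarrow> fps_X dvd Bsum c j"
proof -
  obtain \<phi> where inv: "\<forall>i<10. invertible (\<phi> i)"
    and comm: "\<forall>j\<in>{1..10}. \<phi> (j mod 10) ** xmat b j = xmat c j ** \<phi> (j - 1)"
    using assms(1) unfolding iso_M_def by blast
  from j have "odd j" "j mod 10 = j" "j \<in> {1..10}" "j + 1 \<in> {1..10}" "j - 1 < 10" by auto
  moreover have "\<phi> (j mod 10) ** xmat b j = xmat c j ** \<phi> (j - 1)"
    "\<phi> ((j + 1) mod 10) ** xmat b (j + 1) = xmat c (j + 1) ** \<phi> (j + 1 - 1)"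
    using comm \<open>j \<in> {1..10}\<close> \<open>j + 1 \<in> {1..10}\<close> by blast+
  ultimately have "\<phi> j ** mat2 fps_X (b j) 0 1 = mat2 fps_X (c j) 0 1 ** \<phi> (j - 1)"
    "\<phi> ((j + 1) mod 10) ** mat2 1 (b (j + 1)) 0 fps_X = mat2 1 (c (j + 1)) 0 fps_X ** \<phi> j"
    by (simp_all add: xmat_def)
  moreover have "invertible (\<phi> (j - 1))" using inv \<open>j - 1 < 10\<close> by blast
  ultimately show ?thesis
    unfolding Bsum_def by (intro intertwining_preserves_X_dvd)
qed

lemma same_odd_support_if_iso_M:
  assumes "iso_M b c" and "I \<subseteq> {1, 3, 5, 7, 9}" "J \<subseteq> {1, 3, 5, 7, 9}"
    and supp_b: "\<forall>i\<in>{1, 3, 5, 7, 9}. \<not> fps_X dvd Bsum b i \<longleftrightarrow> i \<in> I"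
    and supp_c: "\<forall>i\<in>{1, 3, 5, 7, 9}. \<not> fps_X dvd Bsum c i \<longleftrightarrow> i \<in> J"
  shows "I = J"
  using iso_M_imp_X_dvd_Bsum_iff[OF assms(1)] assms(2-) by blast

(* The condition t | defect k of iso_construction below, read on constant terms; p, s and a are
   the constant terms of the entries of the map at vertex 0. *)
definition admissible_constants :: "(nat \<Rightarrow> 'a::comm_ring_1) \<Rightarrow> (nat \<Rightarrow> 'a) \<Rightarrow> 'a \<Rightarrow> 'a \<Rightarrow> 'a \<Rightarrow> nat \<Rightarrow> bool" where
  "admissible_constants \<beta> \<gamma> p s a n \<longleftrightarrow>
     (\<forall>k<n. \<gamma> k * (s - a * (\<Sum>m<k. \<beta> m)) - \<beta> k * (p + a * (\<Sum>m<k. \<gamma> m)) - a * \<beta> k * \<gamma> k = 0)"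

lemma admissible_constants_prod:
  assumes "admissible_constants \<beta> \<gamma> p s a n" and "k \<le> n"
  shows "(p + a * (\<Sum>m<k. \<gamma> m)) * (s - a * (\<Sum>m<k. \<beta> m)) = p * s"
  using assms(2)
proof (induction k)
  case (Suc k)
  then have "\<gamma> k * (s - a * (\<Sum>m<k. \<beta> m)) - \<beta> k * (p + a * (\<Sum>m<k. \<gamma> m)) - a * \<beta> k * \<gamma> k = 0"
    using assms(1) unfolding admissible_constants_def by simp
  with Suc show ?case by (simp add: algebra_simps)
qed simp

lemma sum_lessThan_restrict_support:
  fixes f :: "nat \<Rightarrow> 'a::comm_monoid_add"
  assumes "\<forall>m<k. m \<notin> K \<longrightarrow> f m = 0"
  shows "(\<Sum>m<k. f m) = (\<Sum>m\<in>K \<inter> {..<k}. f m)"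
  using assms by (intro sum.mono_neutral_right) auto

lemma card_eq_3_obtain_sorted:
  fixes K :: "'a::linorder set"
  assumes "finite K" "card K = 3"
  obtains k1 k2 k3 where "k1 < k2" "k2 < k3" "K = {k1, k2, k3}"
proof -
  obtain xs where xs: "sorted_wrt (<) xs" "set xs = K" "length xs = 3"
    using sorted_list_of_set.finite_set_strict_sorted[OF assms(1)] assms(2) by metis
  then obtain k1 k2 k3 where "xs = [k1, k2, k3]"
    by (metis (no_types) length_0_conv length_Suc_conv numeral_3_eq_3)
  with xs that show ?thesis by auto
qed

lemma admissible_constants_three_points:
  fixes \<beta> \<gamma> :: "nat \<Rightarrow> 'a::comm_ring_1"
  assumes k: "k1 < k2" "k2 < k3"
    and supp: "\<forall>k<n. k \<notin> {k1, k2, k3} \<longrightarrow> \<beta> k = 0 \<and> \<gamma> k = 0"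
    and sum_\<beta>: "\<beta> k1 + \<beta> k2 + \<beta> k3 = 0" and sum_\<gamma>: "\<gamma> k1 + \<gamma> k2 + \<gamma> k3 = 0"
  shows "admissible_constants \<beta> \<gamma> (\<gamma> k1 * \<gamma> k3 * \<beta> k2) (\<beta> k1 * \<beta> k3 * \<gamma> k2)
           (\<gamma> k1 * \<beta> k2 - \<gamma> k2 * \<beta> k1) n"
  unfolding admissible_constants_def
proof (intro allI impI)
  fix k assume "k < n"
  have partial: "(\<Sum>m<k. \<beta> m) = (\<Sum>m\<in>{k1, k2, k3} \<inter> {..<k}. \<beta> m)"
    "(\<Sum>m<k. \<gamma> m) = (\<Sum>m\<in>{k1, k2, k3} \<inter> {..<k}. \<gamma> m)"
    using supp \<open>k < n\<close> by (auto intro!: sum_lessThan_restrict_support dest: less_trans)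
  have third: "\<beta> k3 = - \<beta> k1 - \<beta> k2" "\<gamma> k3 = - \<gamma> k1 - \<gamma> k2"
    using sum_\<beta> sum_\<gamma> by (simp_all add: algebra_simps add_eq_0_iff)
  consider "k = k1" | "k = k2" | "k = k3" | "k \<notin> {k1, k2, k3}" by blast
  then show "\<gamma> k * (\<beta> k1 * \<beta> k3 * \<gamma> k2 - (\<gamma> k1 * \<beta> k2 - \<gamma> k2 * \<beta> k1) * (\<Sum>m<k. \<beta> m))
      - \<beta> k * (\<gamma> k1 * \<gamma> k3 * \<beta> k2 + (\<gamma> k1 * \<beta> k2 - \<gamma> k2 * \<beta> k1) * (\<Sum>m<k. \<gamma> m))
      - (\<gamma> k1 * \<beta> k2 - \<gamma> k2 * \<beta> k1) * \<beta> k * \<gamma> k = 0"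
  proof cases
    case 1
    with k have "{k1, k2, k3} \<inter> {..<k} = {}" by auto
    then have prefix: "(\<Sum>m<k. \<beta> m) = 0" "(\<Sum>m<k. \<gamma> m) = 0" by (simp_all only: partial sum.empty)
    show ?thesis unfolding prefix unfolding 1 third by (simp add: algebra_simps)
  next
    case 2
    with k have "{k1, k2, k3} \<inter> {..<k} = {k1}" by auto
    then have prefix: "(\<Sum>m<k. \<beta> m) = \<beta> k1" "(\<Sum>m<k. \<gamma> m) = \<gamma> k1" by (simp_all add: partial)
    show ?thesis unfolding prefix unfolding 2 third by (simp add: algebra_simps)
  next
    case 3
    with k have "{k1, k2, k3} \<inter> {..<k} = {k1, k2}" by auto
    with k have prefix: "(\<Sum>m<k. \<beta> m) = \<beta> k1 + \<beta> k2" "(\<Sum>m<k. \<gamma> m) = \<gamma> k1 + \<gamma> k2"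
      by (simp_all add: partial)
    show ?thesis unfolding prefix unfolding 3 third by (simp add: algebra_simps)
  next
    case 4
    with supp \<open>k < n\<close> show ?thesis by simp
  qed
qed

lemma admissible_constants_exist:
  fixes \<beta> \<gamma> :: "nat \<Rightarrow> 'a::idom"
  assumes K: "K \<subseteq> {..<n}" "card K = 3"
    and supp_\<beta>: "\<forall>k<n. \<beta> k \<noteq> 0 \<longleftrightarrow> k \<in> K" and supp_\<gamma>: "\<forall>k<n. \<gamma> k \<noteq> 0 \<longleftrightarrow> k \<in> K"
    and sum_\<beta>: "(\<Sum>k<n. \<beta> k) = 0" and sum_\<gamma>: "(\<Sum>k<n. \<gamma> k) = 0"
  obtains p s a where "p \<noteq> 0" "s \<noteq> 0" "admissible_constants \<beta> \<gamma> p s a n"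
proof -
  obtain k1 k2 k3 where k: "k1 < k2" "k2 < k3" "K = {k1, k2, k3}"
    using card_eq_3_obtain_sorted K finite_subset by blast
  with K have "k3 < n" "K \<inter> {..<n} = K" by auto
  have "(\<Sum>k<n. \<beta> k) = (\<Sum>k\<in>K \<inter> {..<n}. \<beta> k)" "(\<Sum>k<n. \<gamma> k) = (\<Sum>k\<in>K \<inter> {..<n}. \<gamma> k)"
    using supp_\<beta> supp_\<gamma> by (auto intro!: sum_lessThan_restrict_support)
  with sum_\<beta> sum_\<gamma> k \<open>K \<inter> {..<n} = K\<close>
  have sums: "\<beta> k1 + \<beta> k2 + \<beta> k3 = 0" "\<gamma> k1 + \<gamma> k2 + \<gamma> k3 = 0"
    by (simp_all add: add.assoc)
  have "\<forall>k<n. k \<notin> {k1, k2, k3} \<longrightarrow> \<beta> k = 0 \<and> \<gamma> k = 0"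
    using supp_\<beta> supp_\<gamma> k by blast
  note admissible = admissible_constants_three_points[OF k(1,2) this sums]
  have "\<gamma> k1 * \<gamma> k3 * \<beta> k2 \<noteq> 0" "\<beta> k1 * \<beta> k3 * \<gamma> k2 \<noteq> 0"
    using supp_\<beta> supp_\<gamma> k \<open>k3 < n\<close> by auto
  then show ?thesis using admissible by (rule that)
qed

definition even_vertex_map :: "Z \<Rightarrow> Z \<Rightarrow> Z \<Rightarrow> Z \<Rightarrow> Z^2^2" where
  "even_vertex_map P Q A S = mat2 P Q (A * fps_X) S"

(* The map at an odd vertex is determined by the one before it through the arrow x entering it. *)
definition odd_vertex_map :: "Z \<Rightarrow> Z \<Rightarrow> Z \<Rightarrow> Z \<Rightarrow> Z \<Rightarrow> Z \<Rightarrow> Z^2^2" where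
  "odd_vertex_map P Q A S b c = mat2 (P + c * A) (fps_X * Q + c * S - b * (P + c * A)) A (S - b * A)"

lemma odd_arrow_commutes:
  assumes "odd j"
  shows "odd_vertex_map P Q A S (b j) (c j) ** xmat b j = xmat c j ** even_vertex_map P Q A S \<and>
         even_vertex_map P Q A S ** ymat b j = ymat c j ** odd_vertex_map P Q A S (b j) (c j)"
  using assms
  by (simp add: xmat_def ymat_def even_vertex_map_def odd_vertex_map_def mat2_mult mat2_eq_iff algebra_simps)

lemma even_arrow_commutes:
  assumes "even j"
    and P': "P' = P + A * (c0 + c j)" and S': "S' = S - A * (b0 + b j)"
    and Q': "fps_X * Q' = fps_X * Q + ((c0 + c j) * S - (b0 + b j) * P - A * (b0 + b j) * (c0 + c j))"
  shows "even_vertex_map P' Q' A S' ** xmat b j = xmat c j ** odd_vertex_map P Q A S b0 c0 \<and>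
         odd_vertex_map P Q A S b0 c0 ** ymat b j = ymat c j ** even_vertex_map P' Q' A S'"
proof -
  have arrows: "xmat b j = mat2 1 (b j) 0 fps_X" "xmat c j = mat2 1 (c j) 0 fps_X"
    "ymat b j = mat2 fps_X (- b j) 0 1" "ymat c j = mat2 fps_X (- c j) 0 1"
    using \<open>even j\<close> by (simp_all add: xmat_def ymat_def)
  show ?thesis
    unfolding arrows even_vertex_map_def odd_vertex_map_def mat2_mult mat2_eq_iff P' S'
    using Q' by - (intro conjI, (simp add: algebra_simps | algebra)+)
qed

lemma invertible_even_vertex_map: "invertible (even_vertex_map P Q A S) \<longleftrightarrow> fps_nth (P * S) 0 \<noteq> 0"
  by (simp add: even_vertex_map_def invertible_mat2_iff)

lemma invertible_odd_vertex_map: "invertible (odd_vertex_map P Q A S b c) \<longleftrightarrow> fps_nth (P * S) 0 \<noteq> 0"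
proof -
  have "(P + c * A) * (S - b * A) - (fps_X * Q + c * S - b * (P + c * A)) * A = P * S - fps_X * (Q * A)"
    by (simp add: algebra_simps)
  then show ?thesis by (simp add: odd_vertex_map_def invertible_mat2_iff)
qed

lemma sum_Bsum_pairs: "(\<Sum>m<5. Bsum f (2*m+1)) = (\<Sum>i=1..10. f i)"
  by (simp add: Bsum_def eval_nat_numeral)

locale iso_construction =
  fixes b c :: "nat \<Rightarrow> Z" and p s a :: complex
  assumes sum_b: "(\<Sum>i=1..10. b i) = 0" and sum_c: "(\<Sum>i=1..10. c i) = 0"
    and p_nonzero: "p \<noteq> 0" and s_nonzero: "s \<noteq> 0"
    and admissible:
      "admissible_constants (\<lambda>k. fps_nth (Bsum b (2*k+1)) 0) (\<lambda>k. fps_nth (Bsum c (2*k+1)) 0) p s a 5"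
begin

definition upper_left :: "nat \<Rightarrow> Z" where
  "upper_left k = fps_const p + fps_const a * (\<Sum>m<k. Bsum c (2*m+1))"

definition lower_right :: "nat \<Rightarrow> Z" where
  "lower_right k = fps_const s - fps_const a * (\<Sum>m<k. Bsum b (2*m+1))"

definition defect :: "nat \<Rightarrow> Z" where
  "defect k = Bsum c (2*k+1) * lower_right k - Bsum b (2*k+1) * upper_left k
     - fps_const a * Bsum b (2*k+1) * Bsum c (2*k+1)"

(* fps_shift 1 divides by t, exactly since each defect has zero constant term (defect_nth_0). *)
definition upper_right :: "nat \<Rightarrow> Z" where
  "upper_right k = (\<Sum>m<k. fps_shift 1 (defect m))"

definition even_map :: "nat \<Rightarrow> Z^2^2" where
  "even_map k = even_vertex_map (upper_left k) (upper_right k) (fps_const a) (lower_right k)"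

definition phi :: "nat \<Rightarrow> Z^2^2" where
  "phi n = (if even n then even_map (n div 2)
            else odd_vertex_map (upper_left (n div 2)) (upper_right (n div 2)) (fps_const a)
                   (lower_right (n div 2)) (b n) (c n))"

lemma defect_nth_0: "k < 5 \<Longrightarrow> fps_nth (defect k) 0 = 0"
  using admissible
  by (simp add: admissible_constants_def defect_def upper_left_def lower_right_def fps_sum_nth)

lemma fps_X_mult_upper_right: "k \<le> 5 \<Longrightarrow> fps_X * upper_right k = (\<Sum>m<k. defect m)"
  unfolding upper_right_def sum_distrib_left
  by (intro sum.cong refl fps_X_mult_fps_shift_1 defect_nth_0) auto

lemma sum_defect:
  "(\<Sum>m<k. defect m) = fps_const s * (\<Sum>m<k. Bsum c (2*m+1)) - fps_const p * (\<Sum>m<k. Bsum b (2*m+1))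
     - fps_const a * (\<Sum>m<k. Bsum b (2*m+1)) * (\<Sum>m<k. Bsum c (2*m+1))"
  by (induction k) (simp_all add: defect_def upper_left_def lower_right_def algebra_simps)

lemma even_map_5: "even_map 5 = even_map 0"
proof -
  have "(\<Sum>m<5. Bsum b (2*m+1)) = 0" "(\<Sum>m<5. Bsum c (2*m+1)) = 0"
    using sum_b sum_c by (simp_all only: sum_Bsum_pairs)
  moreover from this have "upper_right 5 = 0"
    using fps_X_mult_upper_right[of 5] sum_defect[of 5] by simp
  ultimately show ?thesis
    by (simp add: even_map_def upper_left_def lower_right_def upper_right_def)
qed

lemma phi_wraps: "k < 5 \<Longrightarrow> phi ((2*k+2) mod 10) = even_map (Suc k)"
  using even_map_5 by (cases "k = 4") (simp_all add: phi_def)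

lemma phi_commutes:
  assumes "j \<in> {1..10}"
  shows "phi (j mod 10) ** xmat b j = xmat c j ** phi (j - 1) \<and>
         phi (j - 1) ** ymat b j = ymat c j ** phi (j mod 10)"
proof (cases "odd j")
  case True
  then obtain k where j: "j = 2*k+1" by (metis oddE)
  with assms have "j mod 10 = j" by simp presburger
  with j True show ?thesis
    by (simp add: phi_def even_map_def odd_arrow_commutes)
next
  case False
  with assms have "\<exists>k. j = 2*k+2 \<and> k < 5" by simp presburger
  then obtain k where j: "j = 2*k+2" and "k < 5" by blast
  have "upper_left (Suc k) = upper_left k + fps_const a * (c (2*k+1) + c (2*k+2))"
    "lower_right (Suc k) = lower_right k - fps_const a * (b (2*k+1) + b (2*k+2))"
    by (simp_all add: upper_left_def lower_right_def Bsum_def algebra_simps)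
  moreover have "fps_X * upper_right (Suc k) = fps_X * upper_right k
      + ((c (2*k+1) + c (2*k+2)) * lower_right k - (b (2*k+1) + b (2*k+2)) * upper_left k
         - fps_const a * (b (2*k+1) + b (2*k+2)) * (c (2*k+1) + c (2*k+2)))"
    using fps_X_mult_upper_right[of k] fps_X_mult_upper_right[of "Suc k"] \<open>k < 5\<close>
    by (simp add: defect_def Bsum_def)
  ultimately have "even_map (Suc k) ** xmat b j = xmat c j ** phi (2*k+1) \<and>
      phi (2*k+1) ** ymat b j = ymat c j ** even_map (Suc k)"
    unfolding even_map_def j by (simp add: phi_def even_arrow_commutes)
  with j phi_wraps[OF \<open>k < 5\<close>] show ?thesis by simp
qed

lemma upper_left_lower_right_nth_0: "k \<le> 5 \<Longrightarrow> fps_nth (upper_left k * lower_right k) 0 = p * s"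
  using admissible_constants_prod[OF admissible]
  by (simp add: upper_left_def lower_right_def fps_sum_nth)

lemma phi_invertible: "i < 10 \<Longrightarrow> invertible (phi i)"
  using upper_left_lower_right_nth_0[of "i div 2"] p_nonzero s_nonzero
  by (simp add: phi_def even_map_def invertible_even_vertex_map invertible_odd_vertex_map)

theorem iso: "iso_M b c"
  unfolding iso_M_def using phi_invertible phi_commutes by blast

end

lemma iso_M_if_same_support:
  assumes sum_b: "(\<Sum>i=1..10. b i) = 0" and sum_c: "(\<Sum>i=1..10. c i) = 0"
    and K: "K \<subseteq> {..<5}" "card K = 3"
    and supp_b: "\<forall>k<5. \<not> fps_X dvd Bsum b (2*k+1) \<longleftrightarrow> k \<in> K"
    and supp_c: "\<forall>k<5. \<not> fps_X dvd Bsum c (2*k+1) \<longleftrightarrow> k \<in> K"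
  shows "iso_M b c"
proof -
  have "(\<Sum>k<5. fps_nth (Bsum f (2*k+1)) 0) = fps_nth (\<Sum>i=1..10. f i) 0" for f
    by (simp only: sum_Bsum_pairs flip: fps_sum_nth)
  then have sums: "(\<Sum>k<5. fps_nth (Bsum b (2*k+1)) 0) = 0" "(\<Sum>k<5. fps_nth (Bsum c (2*k+1)) 0) = 0"
    using sum_b sum_c by simp_all
  have supports: "\<forall>k<5. fps_nth (Bsum b (2*k+1)) 0 \<noteq> 0 \<longleftrightarrow> k \<in> K"
    "\<forall>k<5. fps_nth (Bsum c (2*k+1)) 0 \<noteq> 0 \<longleftrightarrow> k \<in> K"
    using supp_b supp_c by (simp_all add: fps_X_dvd_iff)
  obtain p s a where "p \<noteq> 0" "s \<noteq> 0"
    and "admissible_constants (\<lambda>k. fps_nth (Bsum b (2*k+1)) 0) (\<lambda>k. fps_nth (Bsum c (2*k+1)) 0) p s a 5"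
    using admissible_constants_exist[OF K supports sums] .
  with sum_b sum_c have "iso_construction b c p s a"
    by (simp add: iso_construction_def)
  then show ?thesis by (rule iso_construction.iso)
qed

lemma iso_M_if_same_odd_support:
  assumes sum_b: "(\<Sum>i=1..10. b i) = 0" and sum_c: "(\<Sum>i=1..10. c i) = 0"
    and I: "I \<subseteq> {1, 3, 5, 7, 9}" "card I = 3"
    and supp_b: "\<forall>i\<in>{1, 3, 5, 7, 9}. \<not> fps_X dvd Bsum b i \<longleftrightarrow> i \<in> I"
    and supp_c: "\<forall>i\<in>{1, 3, 5, 7, 9}. \<not> fps_X dvd Bsum c i \<longleftrightarrow> i \<in> I"
  shows "iso_M b c"
proof (rule iso_M_if_same_support[OF sum_b sum_c])
  define K where "K = {k. 2*k+1 \<in> I}"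
  have "i = 2*(i div 2)+1" if "i \<in> I" for i
    using I(1) that by auto
  then have "I = (\<lambda>k. 2*k+1) ` K"
    unfolding K_def by (auto simp: image_iff) metis+
  with I(2) show "card K = 3"
    by (simp add: card_image inj_on_def)
  show "K \<subseteq> {..<5}"
    using I(1) unfolding K_def by auto
  have "\<forall>k<5. 2*k+1 \<in> ({1, 3, 5, 7, 9} :: nat set)"
    by (auto simp: less_Suc_eq numeral_eq_Suc)
  then show "\<forall>k<5. \<not> fps_X dvd Bsum b (2*k+1) \<longleftrightarrow> k \<in> K"
    and "\<forall>k<5. \<not> fps_X dvd Bsum c (2*k+1) \<longleftrightarrow> k \<in> K"
    using supp_b supp_c unfolding K_def mem_Collect_eq by blast+
qed

theorem theorem2p3:
  fixes b c :: "nat \<Rightarrow> Z" and i1 i2 i3 j1 j2 j3 :: nat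
  assumes "(\<Sum>i=1..10. b i) = 0" and "(\<Sum>i=1..10. c i) = 0"
    and "{i1, i2, i3} \<subseteq> {1, 3, 5, 7, 9}" and "distinct [i1, i2, i3]"
    and "\<forall>i\<in>{i1, i2, i3}. \<not> fps_X dvd Bsum b i"
    and "\<forall>i\<in>{1, 3, 5, 7, 9} - {i1, i2, i3}. fps_X dvd Bsum b i"
    and "{j1, j2, j3} \<subseteq> {1, 3, 5, 7, 9}" and "distinct [j1, j2, j3]"
    and "\<forall>j\<in>{j1, j2, j3}. \<not> fps_X dvd Bsum c j"
    and "\<forall>j\<in>{1, 3, 5, 7, 9} - {j1, j2, j3}. fps_X dvd Bsum c j"
  shows "iso_M b c \<longleftrightarrow> {i1, i2, i3} = {j1, j2, j3}"
proof
  let ?odd = "{1, 3, 5, 7, 9} :: nat set"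
  have supp_b: "\<forall>i\<in>?odd. \<not> fps_X dvd Bsum b i \<longleftrightarrow> i \<in> {i1, i2, i3}"
    using assms(5,6) by blast
  have supp_c: "\<forall>j\<in>?odd. \<not> fps_X dvd Bsum c j \<longleftrightarrow> j \<in> {j1, j2, j3}"
    using assms(9,10) by blast
  show "{i1, i2, i3} = {j1, j2, j3}" if "iso_M b c"
    using same_odd_support_if_iso_M[OF that assms(3,7) supp_b supp_c] .
  show "iso_M b c" if "{i1, i2, i3} = {j1, j2, j3}"
  proof (rule iso_M_if_same_odd_support[OF assms(1,2,3)])
    show "card {i1, i2, i3} = 3"
      using distinct_card[OF assms(4)] by simp
  qed (use supp_b supp_c that in simp_all)
qed

end
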